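(* Let $\epsilon>0$, let $u\in\mathbb{R}^d$ with $\|u\|_2=1$ be an unknown utility vector, $\mathrm{util}(x)=u^Tx$, and let $D\subseteq\mathbb{R}^d$ be a finite set of tuples with $\|x\|_2\le1$, no two having the same utility. Run the streaming algorithm described in the context (with any parameters $m\ge 1$, $\gamma$) on $D$ in random order, and suppose the stream is terminated at an arbitrary moment, after which the algorithm performs its final step on the tuples that have arrived. Let $D'$ be the set of tuples that have arrived, $x^*=\arg\max_{x\in D'}\mathrm{util}(x)$, and assume $c:=\mathrm{util}(x^* )\ge 0$. Then the returned tuple $x'\in D'$ satisfies $\mathrm{util}(x^* )-\mathrm{util}(x')\le(\epsilon/c)\,\mathrm{util}(x^* )$, i.e. it is an $\epsilon/c$-regret tuple among $D'$.
   Context: Oracle: given two tuples, a comparison oracle returns the one with larger utility; the algorithm accesses $u$ only through it. Filter: a filter holds a set $S$ of tuples sorted by utility via oracle comparisons, $S=\{x_1,\dots,x_s\}$ with $\mathrm{util}(x_1)>\dots>\mathrm{util}(x_s)$. Write $S\vdash x$ if $\min_{\alpha_1,\dots,\alpha_{s-1}\ge 0}\big\|x-x_1-\sum_{j=1}^{s-1}\alpha_j(x_{j+1}-x_j)\big\|_2\le\epsilon$. The filter prunes $x$ iff $S\vdash x$ (an empty filter prunes nothing); add$(x)$ inserts $x$ into $S$; best returns $x_1$. Algorithm: start with an empty filter $F$, empty sequence $\Sigma$ of filters, empty pool $P$. For each arriving $x$: if some filter in $\Sigma$ prunes $x$, skip it; else if $|P|<m$, add $x$ to $P$; else add $x$ to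 $F$, let $P'=\{y\in P: F\text{ prunes }y\}$, and if $|P'|\ge\gamma|P|$ append $F$ to $\Sigma$, start a new empty $F$ and set $P\leftarrow P\setminus P'$. Final step: append $F$ to $\Sigma$, let $X$ be the best tuples of the nonempty filters in $\Sigma$, and return the best tuple of $X\cup P$ by pairwise comparisons. *)

theory Defs
  imports "HOL-Analysis.Analysis"
begin

text \<open>Tuples are vectors in R^d, rendered as the type real^'d. The utility of x
  w.r.t. the unknown utility vector u is u \<bullet> x. The comparison oracle is
  modelled by comparing utilities directly.\<close>

definition util :: "real^'d \<Rightarrow> real^'d \<Rightarrow> real" where
  "util u x = u \<bullet> x"

text \<open>A filter is a list S = [x_1,...,x_s] sorted by strictly decreasing utility.
  S entails x iff the minimal distance from x to
  x_1 + cone{x_(j+1) - x_j} is at most eps.\<close>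

definition entails :: "real \<Rightarrow> (real^'d) list \<Rightarrow> real^'d \<Rightarrow> bool" where
  "entails eps S x \<longleftrightarrow>
     Inf {norm (x - S!0 - (\<Sum>j<length S - 1. \<alpha> j *\<^sub>R (S!(j+1) - S!j))) | \<alpha>.
            \<forall>j. 0 \<le> \<alpha> j} \<le> eps"

definition prunes :: "real \<Rightarrow> (real^'d) list \<Rightarrow> real^'d \<Rightarrow> bool" where
  "prunes eps S x \<longleftrightarrow> S \<noteq> [] \<and> entails eps S x"

definition filter_add :: "real^'d \<Rightarrow> real^'d \<Rightarrow> (real^'d) list \<Rightarrow> (real^'d) list" where
  "filter_add u x S = insort_key (\<lambda>y. - util u y) x S"

definition filter_best :: "(real^'d) list \<Rightarrow> real^'d" where
  "filter_best S = hd S"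

text \<open>Algorithm state: (current filter F, sequence Sigma of filters, pool P).\<close>

type_synonym 'd state = "(real^'d) list \<times> (real^'d) list list \<times> (real^'d) set"

definition step :: "real \<Rightarrow> real^'d \<Rightarrow> nat \<Rightarrow> real \<Rightarrow> real^'d \<Rightarrow> 'd state \<Rightarrow> 'd state" where
  "step eps u m \<gamma> x st =
     (case st of (F, Sig, P) \<Rightarrow>
       if \<exists>G\<in>set Sig. prunes eps G x then (F, Sig, P)
       else if card P < m then (F, Sig, insert x P)
       else (let F' = filter_add u x F; P' = {y\<in>P. prunes eps F' y}
             in if real (card P') \<ge> \<gamma> * real (card P)
                then ([], Sig @ [F'], P - P')
                else (F', Sig, P)))"

definition run :: "real \<Rightarrow> real^'d \<Rightarrow> nat \<Rightarrow> real \<Rightarrow> (real^'d) list \<Rightarrow> 'd state" where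
  "run eps u m \<gamma> xs = fold (step eps u m \<gamma>) xs ([], [], {})"

definition final_output :: "real^'d \<Rightarrow> 'd state \<Rightarrow> real^'d" where
  "final_output u st =
     (case st of (F, Sig, P) \<Rightarrow>
        let X = {filter_best G | G. G \<in> set (Sig @ [F]) \<and> G \<noteq> []}
        in ARG_MAX (util u) y. y \<in> X \<union> P)"

definition algorithm :: "real \<Rightarrow> real^'d \<Rightarrow> nat \<Rightarrow> real \<Rightarrow> (real^'d) list \<Rightarrow> real^'d" where
  "algorithm eps u m \<gamma> xs = final_output u (run eps u m \<gamma> xs)"

end

theory Submission
  imports Defs
begin

text \<open>At every moment each arrived tuple is in the pool, stored in a filter, or pruned by a
  closed filter. Filters are sorted by utility, so a stored tuple is dominated by the best tuple
  of its filter. A pruned tuple lies within \<open>\<epsilon>\<close> of the cone \<open>x\<^sub>1 + cone{x\<^sub>j\<^sub>+\<^sub>1 - x\<^sub>j}\<close>, on which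
  the utility never exceeds \<open>util(x\<^sub>1)\<close> since every generator has nonpositive utility; as
  \<open>\<parallel>u\<parallel> = 1\<close>, its utility exceeds that of the filter's best tuple by at most \<open>\<epsilon>\<close>. The output
  maximises utility over the pool and the best tuples of the filters, so it loses at most
  \<open>\<epsilon> = (\<epsilon>/c)\<cdot>c\<close> against \<open>x\<^sup>*\<close>.\<close>

abbreviation util_sorted :: "real^'d \<Rightarrow> (real^'d) list \<Rightarrow> bool" where
  "util_sorted u G \<equiv> sorted (map (\<lambda>y. - util u y) G)"

lemma arg_max_finite:
  fixes f :: "'a \<Rightarrow> 'b::linorder"
  assumes "finite S" "S \<noteq> {}"
  shows arg_max_finite_in: "arg_max f (\<lambda>x. x \<in> S) \<in> S"
    and arg_max_finite_ge: "y \<in> S \<Longrightarrow> f y \<le> f (arg_max f (\<lambda>x. x \<in> S))"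
proof -
  have "Max (f ` S) \<in> f ` S" using assms by simp
  then obtain x where x: "x \<in> S" "f x = Max (f ` S)" by auto
  then have ub: "\<forall>y\<in>S. f y \<le> f x" using assms by auto
  have "arg_max f (\<lambda>x. x \<in> S) \<in> S \<and> (\<forall>y\<in>S. f y \<le> f (arg_max f (\<lambda>x. x \<in> S)))"
    by (rule arg_maxI[where P = "\<lambda>x. x \<in> S" and x = x
          and Q = "\<lambda>z. z \<in> S \<and> (\<forall>y\<in>S. f y \<le> f z)"])
       (use x(1) ub in \<open>auto simp: not_less\<close>)
  then show "arg_max f (\<lambda>x. x \<in> S) \<in> S" "y \<in> S \<Longrightarrow> f y \<le> f (arg_max f (\<lambda>x. x \<in> S))"
    by auto
qed

lemma util_le_hd:
  assumes "util_sorted u S" "x \<in> set S"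
  shows "util u x \<le> util u (hd S)"
  using assms by (cases S) auto

lemma util_cone_le_hd:
  assumes "util_sorted u S" "S \<noteq> []" "\<forall>j. 0 \<le> \<alpha> j"
  shows "util u (S!0 + (\<Sum>j<length S - 1. \<alpha> j *\<^sub>R (S!(j+1) - S!j))) \<le> util u (hd S)"
proof -
  have "\<alpha> j * (util u (S!(j+1)) - util u (S!j)) \<le> 0" if "j < length S - 1" for j
  proof -
    have "util u (S!(j+1)) \<le> util u (S!j)"
      using sorted_nth_mono[OF assms(1), of j "j+1"] that by simp
    then show ?thesis using assms(3) by (simp add: mult_nonneg_nonpos)
  qed
  then have "(\<Sum>j<length S - 1. \<alpha> j * (util u (S!(j+1)) - util u (S!j))) \<le> 0"
    by (intro sum_nonpos) simp
  then show ?thesis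
    using assms(2) by (simp add: util_def hd_conv_nth inner_add_right inner_sum_right inner_diff_right)
qed

lemma entails_util_le:
  assumes "norm u \<le> 1" "util_sorted u S" "S \<noteq> []" "entails eps S x"
  shows "util u x \<le> util u (hd S) + eps"
proof -
  let ?p = "\<lambda>\<alpha>. S!0 + (\<Sum>j<length S - 1. \<alpha> j *\<^sub>R (S!(j+1) - S!j))"
  have dist_bound: "util u x - util u (hd S) \<le> norm (x - ?p \<alpha>)" if "\<forall>j. 0 \<le> \<alpha> j" for \<alpha>
  proof -
    have "util u x - util u (hd S) \<le> u \<bullet> (x - ?p \<alpha>)"
      using util_cone_le_hd[OF assms(2,3) that] by (simp add: util_def inner_diff_right)
    also have "\<dots> \<le> norm u * norm (x - ?p \<alpha>)" by (rule norm_cauchy_schwarz)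
    also have "\<dots> \<le> norm (x - ?p \<alpha>)" using assms(1) by (simp add: mult_left_le_one_le)
    finally show ?thesis .
  qed
  let ?N = "{norm (x - S!0 - (\<Sum>j<length S - 1. \<alpha> j *\<^sub>R (S!(j+1) - S!j))) | \<alpha>. \<forall>j. 0 \<le> \<alpha> j}"
  have "util u x - util u (hd S) \<le> Inf ?N"
  proof (rule cInf_greatest)
    show "?N \<noteq> {}" by blast
  next
    fix n assume "n \<in> ?N"
    then obtain \<alpha> where "\<forall>j. 0 \<le> \<alpha> j" "n = norm (x - ?p \<alpha>)" by (auto simp: diff_diff_eq)
    then show "util u x - util u (hd S) \<le> n" using dist_bound by simp
  qed
  then show ?thesis using assms(4) unfolding entails_def by simp
qed

definition run_invariant :: "real \<Rightarrow> real^'d \<Rightarrow> (real^'d) set \<Rightarrow> 'd state \<Rightarrow> bool" where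
  "run_invariant eps u A st = (case st of (F, Sig, P) \<Rightarrow>
     P \<subseteq> A \<and> finite P \<and>
     (\<forall>G\<in>set (Sig @ [F]). set G \<subseteq> A \<and> util_sorted u G) \<and>
     (\<forall>x\<in>A. x \<in> P \<or> (\<exists>G\<in>set (Sig @ [F]). x \<in> set G) \<or> (\<exists>G\<in>set Sig. prunes eps G x)))"

lemma run_invariantD:
  assumes "run_invariant eps u A (F, Sig, P)"
  shows "P \<subseteq> A" "finite P"
    and "G \<in> set (Sig @ [F]) \<Longrightarrow> set G \<subseteq> A"
    and "G \<in> set (Sig @ [F]) \<Longrightarrow> util_sorted u G"
    and "x \<in> A \<Longrightarrow> x \<in> P \<or> (\<exists>G\<in>set (Sig @ [F]). x \<in> set G) \<or> (\<exists>G\<in>set Sig. prunes eps G x)"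
  using assms unfolding run_invariant_def by auto

lemma run_invariant_step:
  assumes inv: "run_invariant eps u A st"
  shows "run_invariant eps u (insert x A) (step eps u m \<gamma> x st)"
proof -
  obtain F Sig P where st: "st = (F, Sig, P)" by (cases st)
  define F' where "F' = filter_add u x F"
  define P' where "P' = {y\<in>P. prunes eps F' y}"
  have F': "set F' = insert x (set F)" "util_sorted u F'"
    using inv by (simp_all add: st run_invariant_def F'_def filter_add_def set_insort_key sorted_insort_key)
  consider (pruned) "\<exists>G\<in>set Sig. prunes eps G x" "step eps u m \<gamma> x st = (F, Sig, P)"
    | (pooled) "step eps u m \<gamma> x st = (F, Sig, insert x P)"
    | (closed) "step eps u m \<gamma> x st = ([], Sig @ [F'], P - P')"
    | (extended) "step eps u m \<gamma> x st = (F', Sig, P)"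
    by (cases "\<exists>G\<in>set Sig. prunes eps G x"; cases "card P < m";
        cases "real (card P') \<ge> \<gamma> * real (card P)")
       (simp_all add: st step_def Let_def F'_def[symmetric] P'_def[symmetric])
  then show ?thesis
  proof cases
    case pruned
    then show ?thesis using inv by (auto simp: st run_invariant_def)
  next
    case pooled
    then show ?thesis using inv by (auto simp: st run_invariant_def)
  next
    case closed
    then show ?thesis using inv F' by (auto simp: st run_invariant_def P'_def)
  next
    case extended
    then show ?thesis using inv F' by (auto simp: st run_invariant_def)
  qed
qed

lemma run_invariant_run: "run_invariant eps u (set xs) (run eps u m \<gamma> xs)"
proof (induction xs rule: rev_induct)
  case Nil
  then show ?case by (simp add: run_def run_invariant_def)
next
  case (snoc x xs)
  then show ?case using run_invariant_step[of eps u "set xs" _ x m \<gamma>] by (simp add: run_def)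
qed

definition candidates :: "'d state \<Rightarrow> (real^'d) set" where
  "candidates st = (case st of (F, Sig, P) \<Rightarrow>
     {filter_best G | G. G \<in> set (Sig @ [F]) \<and> G \<noteq> []} \<union> P)"

lemma final_output_eq_arg_max: "final_output u st = arg_max (util u) (\<lambda>y. y \<in> candidates st)"
  by (cases st) (simp add: final_output_def candidates_def)

lemma candidates_finite_subset:
  assumes "run_invariant eps u A st"
  shows "finite (candidates st)" and "candidates st \<subseteq> A"
proof -
  obtain F Sig P where st: "st = (F, Sig, P)" by (cases st)
  note inv = run_invariantD[OF assms[unfolded st]]
  have "candidates st \<subseteq> filter_best ` set (Sig @ [F]) \<union> P"
    by (auto simp: st candidates_def)
  then show "finite (candidates st)"
    by (rule finite_subset) (simp add: inv(2))
  show "candidates st \<subseteq> A"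
  proof
    fix z assume "z \<in> candidates st"
    then consider "z \<in> P" | G where "G \<in> set (Sig @ [F])" "G \<noteq> []" "z = hd G"
      unfolding st candidates_def filter_best_def by auto
    then show "z \<in> A"
    proof cases
      case 1
      then show ?thesis using inv(1) by blast
    next
      case (2 G)
      then show ?thesis using inv(3)[of G] hd_in_set[of G] by blast
    qed
  qed
qed

lemma candidate_dominates:
  assumes inv: "run_invariant eps u A st" and "norm u \<le> 1" "0 \<le> eps" "x \<in> A"
  shows "\<exists>z\<in>candidates st. util u x \<le> util u z + eps"
proof -
  obtain F Sig P where st: "st = (F, Sig, P)" by (cases st)
  note inv = run_invariantD[OF inv[unfolded st]]
  have best: "hd G \<in> candidates st" if "G \<in> set (Sig @ [F])" "G \<noteq> []" for G
    using that by (auto simp: st candidates_def filter_best_def)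
  consider "x \<in> P" | G where "G \<in> set (Sig @ [F])" "x \<in> set G"
    | G where "G \<in> set Sig" "prunes eps G x"
    using inv(5)[OF \<open>x \<in> A\<close>] by blast
  then show ?thesis
  proof cases
    case 1
    then have "x \<in> candidates st" by (simp add: st candidates_def)
    then show ?thesis using \<open>0 \<le> eps\<close> by (intro bexI[of _ x]) simp_all
  next
    case (2 G)
    then have "util u x \<le> util u (hd G)"
      using util_le_hd inv(4) by blast
    then show ?thesis using 2 best \<open>0 \<le> eps\<close> by force
  next
    case (3 G)
    then have "G \<noteq> []" "entails eps G x" by (auto simp: prunes_def)
    moreover have "util_sorted u G" using inv(4) 3 by simp
    ultimately have "util u x \<le> util u (hd G) + eps"
      using entails_util_le \<open>norm u \<le> 1\<close> by blast
    then show ?thesis using 3 best \<open>G \<noteq> []\<close> by auto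
  qed
qed

lemma final_output_regret:
  assumes "run_invariant eps u A st" "norm u \<le> 1" "0 \<le> eps" "x \<in> A"
  shows "final_output u st \<in> A" and "util u x \<le> util u (final_output u st) + eps"
proof -
  obtain z where z: "z \<in> candidates st" "util u x \<le> util u z + eps"
    using candidate_dominates[OF assms] by blast
  then have "candidates st \<noteq> {}" by blast
  note fin = candidates_finite_subset[OF assms(1)]
  show "final_output u st \<in> A"
    using arg_max_finite_in[OF fin(1) \<open>candidates st \<noteq> {}\<close>] fin(2)
    by (auto simp: final_output_eq_arg_max)
  show "util u x \<le> util u (final_output u st) + eps"
    using arg_max_finite_ge[OF fin(1) \<open>candidates st \<noteq> {}\<close> z(1), of "util u"] z(2)
    by (simp add: final_output_eq_arg_max)
qed

theorem theorem4p3: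
  fixes eps \<gamma> :: real and m k :: nat and u :: "real^'d"
    and D :: "(real^'d) set" and xs :: "(real^'d) list" and xstar :: "real^'d"
  assumes "eps > 0"
    and "norm u = 1"
    and "finite D"
    and "\<forall>x\<in>D. norm x \<le> 1"
    and "inj_on (util u) D"
    and "m \<ge> 1"
    and "distinct xs" and "set xs = D"
    and "1 \<le> k" and "k \<le> length xs"
    and "xstar \<in> set (take k xs)"
    and "\<forall>y\<in>set (take k xs). util u y \<le> util u xstar"
    and "util u xstar \<ge> 0"
  shows "algorithm eps u m \<gamma> (take k xs) \<in> set (take k xs) \<and>
         (util u xstar > 0 \<longrightarrow>
            util u xstar - util u (algorithm eps u m \<gamma> (take k xs))
              \<le> (eps / util u xstar) * util u xstar)"
proof -
  let ?ys = "take k xs"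
  note regret = final_output_regret[OF run_invariant_run[of eps u ?ys m \<gamma>]]
  have "algorithm eps u m \<gamma> ?ys \<in> set ?ys"
    and "util u xstar - util u (algorithm eps u m \<gamma> ?ys) \<le> eps"
    using regret[of xstar] assms(1,2,11) by (simp_all add: algorithm_def)
  then show ?thesis by simp
qed

end
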